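(* Consider the $1$-median problem in $\mathbb{R}^1$ where object $i$ has its own maximum speed $v_i>0$. Let $v_M=\max_i v_i$ and $v_m=\min_i v_i$. There is an absolute constant $C$ such that on every instance $I$ with $n$ objects, the measure of the Round-robin strategy is at most $C\,\frac{v_M n}{v_m}\cdot\mathrm{OPT}(I)$.
   Context: Setting. There are $n\ge 2$ objects in $\mathbb{R}^d$; object $i$ follows a trajectory $p_i:[0,\infty)\to\mathbb{R}^d$ with $|p_i(t)-p_i(s)|\le v_i|t-s|$ for all $s,t$, where $v_i>0$ is a known speed bound for object $i$. The initial positions $p_i(0)$ are known. A query strategy queries one object at each time $t=1,2,3,\dots$; querying object $i$ at time $t$ reveals $p_i(t)$. For $t\ge 0$ let $\tau_i(t)$ be the last time $\le t$ at which object $i$ was queried (or $0$ if never). The uncertainty region of object $i$ at time $t$ is the closed ball $U_i(t)$ of radius $v_i(t-\tau_i(t))$ centered at $p_i(\tau_i(t))$. For a center function $f$ mapping an $n$-tuple of points to a point, the uncertainty region of the center at time $t$ is $\{f(q_1,\dots,q_n): q_i\in U_i(t)\}$. The size of a set is its diameter. The measure of a strategy on an instance is the supremum over $t\in\{1,2,\dots\}$ of the size of the center's uncertainty region at time $t$ (just after the query at time $t$). The optimal measure $\mathrm{OPT}(I)$ of an instance $I$ is the infimum of the measure over all query sequences, which may be chosen with full knowledge of the trajectories. The Round-robin strategy queries objects $1,2,\dots,n,1,2,\dots,n,\dots$ in a fixed cyclic order. Here $d=1$ and the center function is the $1$-median: for $x_1,\dots,x_n\in\mathbb{R}$ it is the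 $\lceil n/2\rceil$-th smallest of the $x_i$ if $n$ is odd, and the midpoint of the $(n/2)$-th and $(n/2+1)$-th smallest if $n$ is even. *)

theory Defs
  imports "HOL-Analysis.Analysis"
begin

text \<open>Objects are indexed 0..n-1. A trajectory family p :: nat => real => real;
object i at time t is at p i t. A query strategy is a sequence sigma :: nat => nat,
sigma t being the object queried at time t (t = 1,2,...).\<close>

definition valid_instance :: "nat \<Rightarrow> (nat \<Rightarrow> real) \<Rightarrow> (nat \<Rightarrow> real \<Rightarrow> real) \<Rightarrow> bool" where
  "valid_instance n v p \<longleftrightarrow> n \<ge> 2 \<and> (\<forall>i<n. v i > 0) \<and>
     (\<forall>i<n. \<forall>s\<ge>0. \<forall>t\<ge>0. \<bar>p i t - p i s\<bar> \<le> v i * \<bar>t - s\<bar>)"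

definition valid_strategy :: "nat \<Rightarrow> (nat \<Rightarrow> nat) \<Rightarrow> bool" where
  "valid_strategy n \<sigma> \<longleftrightarrow> (\<forall>t\<ge>1. \<sigma> t < n)"

definition last_query :: "(nat \<Rightarrow> nat) \<Rightarrow> nat \<Rightarrow> nat \<Rightarrow> nat" where
  "last_query \<sigma> i t = Max ({0} \<union> {k. 1 \<le> k \<and> k \<le> t \<and> \<sigma> k = i})"

definition unc_region :: "(nat \<Rightarrow> real) \<Rightarrow> (nat \<Rightarrow> real \<Rightarrow> real) \<Rightarrow> (nat \<Rightarrow> nat) \<Rightarrow> nat \<Rightarrow> nat \<Rightarrow> real set" where
  "unc_region v p \<sigma> i t = cball (p i (real (last_query \<sigma> i t)))
       (v i * (real t - real (last_query \<sigma> i t)))"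

definition median1 :: "real list \<Rightarrow> real" where
  "median1 xs = (let ys = sort xs; m = length xs in
     if odd m then ys ! (m div 2) else (ys ! (m div 2 - 1) + ys ! (m div 2)) / 2)"

definition center_region :: "nat \<Rightarrow> (nat \<Rightarrow> real) \<Rightarrow> (nat \<Rightarrow> real \<Rightarrow> real) \<Rightarrow> (nat \<Rightarrow> nat) \<Rightarrow> nat \<Rightarrow> real set" where
  "center_region n v p \<sigma> t =
     {median1 (map q [0..<n]) | q. \<forall>i<n. q i \<in> unc_region v p \<sigma> i t}"

text \<open>Size = diameter (the region is bounded). Measure = sup over t = 1,2,...\<close>
definition measure_strat :: "nat \<Rightarrow> (nat \<Rightarrow> real) \<Rightarrow> (nat \<Rightarrow> real \<Rightarrow> real) \<Rightarrow> (nat \<Rightarrow> nat) \<Rightarrow> ereal" where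
  "measure_strat n v p \<sigma> = (SUP t\<in>{1..}. ereal (diameter (center_region n v p \<sigma> t)))"

definition OPT :: "nat \<Rightarrow> (nat \<Rightarrow> real) \<Rightarrow> (nat \<Rightarrow> real \<Rightarrow> real) \<Rightarrow> ereal" where
  "OPT n v p = (INF \<sigma>\<in>{\<sigma>. valid_strategy n \<sigma>}. measure_strat n v p \<sigma>)"

definition round_robin :: "nat \<Rightarrow> nat \<Rightarrow> nat" where
  "round_robin n t = (t - 1) mod n"

end

theory Submission
  imports Defs
begin

text \<open>
  Round-robin queries every object within any window of \<open>n\<close> steps, so all uncertainty
  radii stay below \<open>n v\<^sub>M\<close>; as the median is 1-Lipschitz for the sup-distance, the
  centre's uncertainty region has diameter at most \<open>2 n v\<^sub>M\<close>.

  Conversely, every strategy has measure at least \<open>v\<^sub>m / 2\<close>. The region contains the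
  medians of the left and of the right interval endpoints, and at each time every object except
  the queried one has an interval of length at least \<open>2 v\<^sub>m\<close>. For even \<open>n\<close> a counting
  argument on order statistics makes these two medians \<open>v\<^sub>m\<close> apart. For odd \<open>n\<close>, a
  spread below \<open>v\<^sub>m / 2\<close> forces the unqueried intervals to split evenly into those
  right and those left of the queried position. Their total clearance from the queried position
  then drops by at least \<open>v\<^sub>m / 2\<close> per step (the intervals grow, and the motion of the
  queried position cancels between the two halves) while staying bounded below, so the spread
  cannot remain small forever.
\<close>

lemma sorted_nth_le_iff:
  fixes ys :: "'a::linorder list"
  assumes "sorted ys" "j < length ys"
  shows "ys ! j \<le> y \<longleftrightarrow> j < length (filter (\<lambda>z. z \<le> y) ys)"
  using assms
proof (induction ys arbitrary: j)
  case (Cons a ys)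
  have "y < z" if "y < a" "z \<in> set ys" for z
    using Cons.prems(1) that by (auto intro: less_le_trans)
  then show ?case
    using Cons by (cases j) (auto simp: filter_empty_conv not_le nth_Cons' dest: bspec[of _ _ "ys ! (j - 1)"])
qed simp

lemma le_sorted_nth_iff:
  fixes ys :: "'a::linorder list"
  assumes "sorted ys" "j < length ys"
  shows "y \<le> ys ! j \<longleftrightarrow> length ys - j \<le> length (filter (\<lambda>z. y \<le> z) ys)"
  using assms
proof (induction ys arbitrary: j)
  case (Cons a ys)
  show ?case
  proof (cases "y \<le> a")
    case True
    then have "filter (\<lambda>z. y \<le> z) (a # ys) = a # ys"
      using Cons.prems(1) by (auto intro!: filter_True intro: order_trans)
    moreover have "y \<le> (a # ys) ! j"
      using True Cons.prems by (auto intro: order_trans simp: nth_Cons')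
    ultimately show ?thesis by simp
  next
    case False
    then show ?thesis
      using Cons by (cases j) (auto dest: order_trans[OF _ length_filter_le])
  qed
qed simp

definition order_stat :: "nat \<Rightarrow> (nat \<Rightarrow> 'a::linorder) \<Rightarrow> nat \<Rightarrow> 'a" where
  "order_stat n x j = sort (map x [0..<n]) ! j"

lemma length_filter_sort_map_upt:
  "length (filter P (sort (map x [0..<n]))) = card {i. i < n \<and> P (x i)}"
  by (simp add: filter_sort length_filter_conv_card cong: conj_cong)

lemma order_stat_le_iff:
  assumes "j < n"
  shows "order_stat n x j \<le> y \<longleftrightarrow> j < card {i. i < n \<and> x i \<le> y}"
  using sorted_nth_le_iff[of "sort (map x [0..<n])" j y] assms
  by (simp add: order_stat_def length_filter_sort_map_upt)

lemma le_order_stat_iff: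
  assumes "j < n"
  shows "y \<le> order_stat n x j \<longleftrightarrow> n - j \<le> card {i. i < n \<and> y \<le> x i}"
  using le_sorted_nth_iff[of "sort (map x [0..<n])" j y] assms
  by (simp add: order_stat_def length_filter_sort_map_upt)

lemma card_le_order_stat: "j < n \<Longrightarrow> j < card {i. i < n \<and> x i \<le> order_stat n x j}"
  using order_stat_le_iff by blast

lemma card_order_stat_le: "j < n \<Longrightarrow> n - j \<le> card {i. i < n \<and> order_stat n x j \<le> x i}"
  using le_order_stat_iff by blast

lemma order_stat_le_shift:
  fixes x y :: "nat \<Rightarrow> real"
  assumes "j < n" "\<And>i. i < n \<Longrightarrow> x i \<le> y i + e"
  shows "order_stat n x j \<le> order_stat n y j + e"
proof -
  have "j < card {i. i < n \<and> y i \<le> order_stat n y j}"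
    using card_le_order_stat[OF assms(1)] .
  also have "\<dots> \<le> card {i. i < n \<and> x i \<le> order_stat n y j + e}"
    by (rule card_mono) (use assms(2) in force)+
  finally show ?thesis
    using order_stat_le_iff[OF assms(1)] by blast
qed

lemma median1_map_upt:
  "median1 (map x [0..<n]) = (if odd n then order_stat n x (n div 2)
     else (order_stat n x (n div 2 - 1) + order_stat n x (n div 2)) / 2)"
  by (simp add: median1_def order_stat_def Let_def)

lemma median1_le_shift:
  assumes "1 \<le> n" "\<And>i. i < n \<Longrightarrow> x i \<le> y i + e"
  shows "median1 (map x [0..<n]) \<le> median1 (map y [0..<n]) + e"
proof -
  have "order_stat n x j \<le> order_stat n y j + e" if "j \<le> n div 2" for j
    using that assms by (intro order_stat_le_shift) auto
  from this[of "n div 2"] this[of "n div 2 - 1"] show ?thesis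
    by (auto simp: median1_map_upt field_simps)
qed

lemma median1_dist_le:
  assumes "1 \<le> n" "\<And>i. i < n \<Longrightarrow> \<bar>x i - y i\<bar> \<le> e"
  shows "\<bar>median1 (map x [0..<n]) - median1 (map y [0..<n])\<bar> \<le> e"
  using median1_le_shift[of n x y e] median1_le_shift[of n y x e] assms
  by (fastforce simp: abs_le_iff)

lemma card_Collect_less_mono:
  fixes n :: nat
  shows "(\<And>i. i < n \<Longrightarrow> P i \<Longrightarrow> Q i) \<Longrightarrow> card {i. i < n \<and> P i} \<le> card {i. i < n \<and> Q i}"
  by (rule card_mono) (auto intro: finite_subset[of _ "{..<n}"])

lemma card_Collect_less_mono_except:
  fixes n :: nat
  assumes "\<And>i. i < n \<Longrightarrow> i \<noteq> d \<Longrightarrow> P i \<Longrightarrow> Q i"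
  shows "card {i. i < n \<and> P i} \<le> Suc (card {i. i < n \<and> Q i})"
proof -
  have "card {i. i < n \<and> P i} \<le> card (insert d {i. i < n \<and> Q i})"
    by (rule card_mono) (use assms in \<open>auto intro: finite_subset[of _ "{..<n}"]\<close>)
  also have "\<dots> \<le> Suc (card {i. i < n \<and> Q i})"
    by (simp add: card_insert_if)
  finally show ?thesis .
qed

lemma even_median_spread:
  fixes L H :: "nat \<Rightarrow> real"
  assumes n: "even n" "2 \<le> n" and "d < n"
    and le: "\<And>i. i < n \<Longrightarrow> L i \<le> H i"
    and gap: "\<And>i. i < n \<Longrightarrow> i \<noteq> d \<Longrightarrow> L i + 2 * w \<le> H i"
    and point: "L d = H d"
  shows "w \<le> median1 (map H [0..<n]) - median1 (map L [0..<n])"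
proof -
  define k where "k = n div 2"
  have k: "k - 1 < n" "k < n" "n - (k - 1) = Suc (n - k)"
    using n by (auto simp: k_def)
  define \<alpha> where "\<alpha> = order_stat n L (k - 1)"
  define \<beta> where "\<beta> = order_stat n L k"
  define \<gamma> where "\<gamma> = order_stat n H (k - 1)"
  define \<eta> where "\<eta> = order_stat n H k"
  note defs = \<alpha>_def \<beta>_def \<gamma>_def \<eta>_def
  have LH: "\<And>i. i < n \<Longrightarrow> L i \<le> H i + 0"
    using le by simp
  have "\<alpha> \<le> \<gamma>" "\<beta> \<le> \<eta>"
    using order_stat_le_shift[OF k(1) LH] order_stat_le_shift[OF k(2) LH]
    by (simp_all add: defs)
  have "\<alpha> + 2 * w \<le> \<eta>"
  proof -
    have "Suc (n - k) \<le> card {i. i < n \<and> \<alpha> \<le> L i}"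
      using card_order_stat_le[OF k(1), of L] by (simp only: defs flip: k(3))
    also have "\<dots> \<le> Suc (card {i. i < n \<and> \<alpha> + 2 * w \<le> H i})"
      by (rule card_Collect_less_mono_except[where d = d]) (use gap in force)
    finally show ?thesis
      by (simp add: \<eta>_def le_order_stat_iff[OF k(2)])
  qed
  moreover have "\<alpha> + \<beta> + 2 * w \<le> \<gamma> + \<eta>" if "\<gamma> < \<beta>"
    \<comment> \<open>The gapless object lies below \<open>\<beta>\<close> or above \<open>\<gamma>\<close>, so it spoils at most one of two counts.\<close>
  proof (cases "H d < \<beta>")
    case True
    have "n - k \<le> card {i. i < n \<and> \<beta> \<le> L i}"
      using card_order_stat_le[OF k(2)] by (simp add: defs)
    also have "\<dots> \<le> card {i. i < n \<and> \<beta> + 2 * w \<le> H i}"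
      by (rule card_Collect_less_mono) (use True gap point in force)
    finally have "\<beta> + 2 * w \<le> \<eta>"
      by (simp add: \<eta>_def le_order_stat_iff[OF k(2)])
    with \<open>\<alpha> \<le> \<gamma>\<close> show ?thesis by linarith
  next
    case False
    have "k - 1 < card {i. i < n \<and> H i \<le> \<gamma>}"
      using card_le_order_stat[OF k(1)] by (simp add: defs)
    also have "\<dots> \<le> card {i. i < n \<and> L i \<le> \<gamma> - 2 * w}"
      by (rule card_Collect_less_mono) (use False that gap in force)
    finally have "\<alpha> \<le> \<gamma> - 2 * w"
      using order_stat_le_iff[OF k(1), of L] unfolding \<alpha>_def by blast
    with \<open>\<beta> \<le> \<eta>\<close> show ?thesis by linarith
  qed
  ultimately have "\<alpha> + \<beta> + 2 * w \<le> \<gamma> + \<eta>"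
    by (cases "\<gamma> < \<beta>") auto
  then show ?thesis
    using n by (simp add: median1_map_upt defs k_def field_simps)
qed

lemma odd_median_split:
  fixes L H :: "nat \<Rightarrow> real"
  assumes "odd n" "d < n"
    and le: "\<And>i. i < n \<Longrightarrow> L i \<le> H i"
    and gap: "\<And>i. i < n \<Longrightarrow> i \<noteq> d \<Longrightarrow> L i + 2 * w \<le> H i"
    and point: "L d = c" "H d = c"
    and spread: "median1 (map H [0..<n]) - median1 (map L [0..<n]) < \<delta>" and "\<delta> < w"
  defines "Rgt \<equiv> {i. i < n \<and> i \<noteq> d \<and> c - \<delta> \<le> L i}"
    and "Lft \<equiv> {i. i < n \<and> i \<noteq> d \<and> H i \<le> c + \<delta>}"
  shows "Rgt \<union> Lft = {i. i < n \<and> i \<noteq> d}" and "Rgt \<inter> Lft = {}" and "card Rgt = card Lft"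
proof -
  define m where "m = n div 2"
  have m: "n = Suc (2 * m)" "m < n"
    using \<open>odd n\<close> by (auto simp: m_def elim: oddE)
  define A where "A = order_stat n L m"
  define B where "B = order_stat n H m"
  have "B - A < \<delta>"
    using spread \<open>odd n\<close> by (simp add: median1_map_upt A_def B_def m_def)
  have "A \<le> B"
    using order_stat_le_shift[OF m(2), of L H 0] le by (simp add: A_def B_def)
  define Sh where "Sh = {i. i < n \<and> H i \<le> B}"
  define Sl where "Sl = {i. i < n \<and> A \<le> L i}"
  have fin: "finite Sh" "finite Sl"
    by (simp_all add: Sh_def Sl_def)
  have card_S: "m < card Sh" "Suc m \<le> card Sl"
    using card_le_order_stat[OF m(2), of H] card_order_stat_le[OF m(2), of L] m(1)
    by (simp_all add: Sh_def Sl_def B_def A_def)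
  have "d \<in> Sh \<inter> Sl"
    \<comment> \<open>Both sets hold a strict majority of the objects, and only a gapless object can be in both.\<close>
  proof -
    have "Sh \<inter> Sl \<noteq> {}"
    proof
      assume "Sh \<inter> Sl = {}"
      then have "card Sh + card Sl = card (Sh \<union> Sl)"
        by (simp add: card_Un_disjoint fin)
      also have "\<dots> \<le> n"
        using card_mono[of "{..<n}" "Sh \<union> Sl"] by (auto simp: Sh_def Sl_def)
      finally show False
        using card_S m(1) by linarith
    qed
    moreover have "i = d" if "i \<in> Sh \<inter> Sl" for i
      using that gap[of i] \<open>A \<le> B\<close> \<open>B - A < \<delta>\<close> \<open>\<delta> < w\<close>
      by (fastforce simp: Sh_def Sl_def)
    ultimately show ?thesis
      by blast
  qed
  then have "A \<le> c" "c \<le> B"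
    using point by (auto simp: Sh_def Sl_def)
  have "Sh - {d} \<subseteq> Lft" "Sl - {d} \<subseteq> Rgt"
    using \<open>A \<le> c\<close> \<open>c \<le> B\<close> \<open>B - A < \<delta>\<close> by (auto simp: Sh_def Sl_def Lft_def Rgt_def)
  then have "m \<le> card Lft" "m \<le> card Rgt"
    using card_mono[of Lft "Sh - {d}"] card_mono[of Rgt "Sl - {d}"] card_S fin
    by (auto simp: Lft_def Rgt_def card_Diff_singleton_if split: if_splits)
  show disj: "Rgt \<inter> Lft = {}"
    using gap \<open>\<delta> < w\<close> by (force simp: Rgt_def Lft_def)
  have sub: "Rgt \<union> Lft \<subseteq> {i. i < n \<and> i \<noteq> d}"
    by (auto simp: Rgt_def Lft_def)
  have "card {i. i < n \<and> i \<noteq> d} = 2 * m"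
    using \<open>d < n\<close> m(1) card_Diff_singleton[of d "{..<n}"] by (simp add: set_diff_eq lessThan_def)
  moreover have "card (Rgt \<union> Lft) = card Rgt + card Lft"
    by (rule card_Un_disjoint[OF _ _ disj]) (simp_all add: Rgt_def Lft_def)
  moreover have "card (Rgt \<union> Lft) \<le> card {i. i < n \<and> i \<noteq> d}"
    by (rule card_mono[OF _ sub]) simp
  ultimately have "card Rgt = m" "card Lft = m" "card (Rgt \<union> Lft) = card {i. i < n \<and> i \<noteq> d}"
    using \<open>m \<le> card Lft\<close> \<open>m \<le> card Rgt\<close> by linarith+
  then show "card Rgt = card Lft" "Rgt \<union> Lft = {i. i < n \<and> i \<noteq> d}"
    using card_subset_eq[OF _ sub] by simp_all
qed

lemma finite_last_query_set: "finite ({0::nat} \<union> {k. 1 \<le> k \<and> k \<le> t \<and> \<sigma> k = i})"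
  by (rule finite_subset[of _ "{..t}"]) auto

lemma last_query_le: "last_query \<sigma> i t \<le> t"
  unfolding last_query_def using finite_last_query_set[of t \<sigma> i] by (subst Max_le_iff) auto

lemma last_query_queried: "1 \<le> t \<Longrightarrow> last_query \<sigma> (\<sigma> t) t = t"
  unfolding last_query_def using finite_last_query_set[of t \<sigma>] by (intro Max_eqI) auto

lemma last_query_less: "1 \<le> t \<Longrightarrow> \<sigma> t \<noteq> i \<Longrightarrow> last_query \<sigma> i t < t"
  unfolding last_query_def using finite_last_query_set[of t \<sigma> i]
  by (subst Max_less_iff) (auto simp: le_less)

lemma last_query_Suc: "\<sigma> (Suc t) \<noteq> i \<Longrightarrow> last_query \<sigma> i (Suc t) = last_query \<sigma> i t"
  unfolding last_query_def by (metis le_Suc_eq)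

lemma round_robin_last_query:
  assumes "i < n"
  shows "t \<le> last_query (round_robin n) i t + n"
proof (cases "t \<le> n")
  case False
  \<comment> \<open>the latest time \<open>k \<le> t\<close> with \<open>k - 1 \<equiv> i (mod n)\<close>\<close>
  define k where "k = t - (t - 1 - i) mod n"
  have "(t - 1 - i) mod n < n"
    using assms by simp
  then have k: "1 \<le> k" "k \<le> t" "t \<le> k + n"
    using False by (auto simp: k_def)
  have "k - 1 = i + n * ((t - 1 - i) div n)"
    using False assms mult_div_mod_eq[of n "t - 1 - i"] unfolding k_def by linarith
  then have "round_robin n k = i"
    using assms by (simp add: round_robin_def)
  then have "k \<le> last_query (round_robin n) i t"
    unfolding last_query_def using finite_last_query_set[of t "round_robin n" i] k by (intro Max_ge) auto
  then show ?thesis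
    using k by linarith
qed simp

lemma valid_instance_speed_bounds:
  assumes "valid_instance n v p"
  shows "0 < Min (v ` {..<n})" and "Min (v ` {..<n}) \<le> Max (v ` {..<n})"
proof -
  have ne: "v ` {..<n} \<noteq> {}"
    using assms by (auto simp: valid_instance_def lessThan_empty_iff)
  then show "0 < Min (v ` {..<n})"
    using Min_in[of "v ` {..<n}"] assms by (auto simp: valid_instance_def)
  show "Min (v ` {..<n}) \<le> Max (v ` {..<n})"
    using ne Min_in[of "v ` {..<n}"] by (intro Max_ge) auto
qed

locale query_run =
  fixes n :: nat and v :: "nat \<Rightarrow> real" and p :: "nat \<Rightarrow> real \<Rightarrow> real" and \<sigma> :: "nat \<Rightarrow> nat"
  assumes valid_inst: "valid_instance n v p" and valid_strat: "valid_strategy n \<sigma>"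
begin

definition "anchor i t = p i (real (last_query \<sigma> i t))"
definition "radius i t = v i * (real t - real (last_query \<sigma> i t))"
definition "lo i t = anchor i t - radius i t"
definition "hi i t = anchor i t + radius i t"
definition "vmin = Min (v ` {..<n})"
definition "queried_pos t = p (\<sigma> t) (real t)"
definition "diam t = diameter (center_region n v p \<sigma> t)"

abbreviation "med x \<equiv> median1 (map x [0..<n])"

lemma two_le_n: "2 \<le> n"
  using valid_inst by (simp add: valid_instance_def)

lemma speed_pos: "i < n \<Longrightarrow> 0 < v i"
  using valid_inst by (simp add: valid_instance_def)

lemma queried_less: "1 \<le> t \<Longrightarrow> \<sigma> t < n"
  using valid_strat by (simp add: valid_strategy_def)

lemma vmin_le: "i < n \<Longrightarrow> vmin \<le> v i"
  unfolding vmin_def by (rule Min_le) auto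

lemma vmin_pos: "0 < vmin"
  using valid_instance_speed_bounds(1)[OF valid_inst] by (simp add: vmin_def)

lemma radius_nonneg: "i < n \<Longrightarrow> 0 \<le> radius i t"
  unfolding radius_def using speed_pos[of i] last_query_le[of \<sigma> i t] by simp

lemma lo_le_hi: "i < n \<Longrightarrow> lo i t \<le> hi i t"
  using radius_nonneg[of i t] by (simp add: lo_def hi_def)

lemma lo_queried: "1 \<le> t \<Longrightarrow> lo (\<sigma> t) t = queried_pos t"
  and hi_queried: "1 \<le> t \<Longrightarrow> hi (\<sigma> t) t = queried_pos t"
  by (simp_all add: lo_def hi_def anchor_def radius_def queried_pos_def last_query_queried)

lemma vmin_le_radius: "1 \<le> t \<Longrightarrow> i < n \<Longrightarrow> i \<noteq> \<sigma> t \<Longrightarrow> vmin \<le> radius i t"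
proof -
  assume "1 \<le> t" "i < n" "i \<noteq> \<sigma> t"
  then have "1 \<le> real t - real (last_query \<sigma> i t)"
    using last_query_less[of t \<sigma> i] by linarith
  then show ?thesis
    unfolding radius_def using vmin_le[OF \<open>i < n\<close>] speed_pos[OF \<open>i < n\<close>]
    by (metis mult_left_mono mult.right_neutral less_imp_le order_trans)
qed

lemma lo_hi_gap: "1 \<le> t \<Longrightarrow> i < n \<Longrightarrow> i \<noteq> \<sigma> t \<Longrightarrow> lo i t + 2 * vmin \<le> hi i t"
  using vmin_le_radius[of t i] by (simp add: lo_def hi_def)

lemma
  assumes "\<sigma> (Suc t) \<noteq> i"
  shows lo_Suc: "lo i (Suc t) = lo i t - v i" and hi_Suc: "hi i (Suc t) = hi i t + v i"
  using last_query_Suc[of \<sigma> t i, OF assms] by (simp_all add: lo_def hi_def anchor_def radius_def algebra_simps)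

lemma median_mem_center_region:
  assumes "\<And>i. i < n \<Longrightarrow> \<bar>q i - anchor i t\<bar> \<le> radius i t"
  shows "med q \<in> center_region n v p \<sigma> t"
  unfolding center_region_def unc_region_def
  using assms by (auto simp: dist_real_def anchor_def radius_def abs_minus_commute)

lemma center_region_near_median:
  assumes "z \<in> center_region n v p \<sigma> t" "\<And>i. i < n \<Longrightarrow> radius i t \<le> b"
  shows "\<bar>z - med (\<lambda>i. anchor i t)\<bar> \<le> b"
proof -
  obtain q where q: "z = med q" "\<And>i. i < n \<Longrightarrow> q i \<in> unc_region v p \<sigma> i t"
    using assms(1) unfolding center_region_def by auto
  have "\<bar>q i - anchor i t\<bar> \<le> b" if "i < n" for i
    using q(2)[OF that] assms(2)[OF that]
    by (auto simp: unc_region_def dist_real_def anchor_def radius_def abs_minus_commute)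
  then show ?thesis
    unfolding q(1) using two_le_n by (intro median1_dist_le) auto
qed

lemma bounded_center_region: "bounded (center_region n v p \<sigma> t)"
proof -
  define b where "b = (\<Sum>i<n. radius i t)"
  have "radius i t \<le> b" if "i < n" for i
    unfolding b_def using that by (intro member_le_sum) (auto intro: radius_nonneg)
  then have "center_region n v p \<sigma> t \<subseteq> cball (med (\<lambda>i. anchor i t)) b"
    using center_region_near_median by (fastforce simp: dist_real_def abs_minus_commute)
  then show ?thesis
    using bounded_cball bounded_subset by blast
qed

lemma diam_le:
  assumes "\<And>i. i < n \<Longrightarrow> radius i t \<le> b" "0 \<le> b"
  shows "diam t \<le> 2 * b"
  unfolding diam_def
proof (rule diameter_le)
  fix x y
  assume "x \<in> center_region n v p \<sigma> t" "y \<in> center_region n v p \<sigma> t"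
  then have "\<bar>x - med (\<lambda>i. anchor i t)\<bar> \<le> b" "\<bar>y - med (\<lambda>i. anchor i t)\<bar> \<le> b"
    using center_region_near_median assms(1) by blast+
  then show "norm (x - y) \<le> 2 * b"
    by simp
qed (use assms(2) in simp)

lemma median_spread_le_diam: "med (\<lambda>i. hi i t) - med (\<lambda>i. lo i t) \<le> diam t"
proof -
  have "med (\<lambda>i. hi i t) \<in> center_region n v p \<sigma> t" "med (\<lambda>i. lo i t) \<in> center_region n v p \<sigma> t"
    by (auto simp: hi_def lo_def intro!: median_mem_center_region radius_nonneg)
  then have "dist (med (\<lambda>i. hi i t)) (med (\<lambda>i. lo i t)) \<le> diam t"
    unfolding diam_def by (intro diameter_bounded_bound bounded_center_region)
  then show ?thesis
    by (simp add: dist_real_def)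
qed

lemma even_vmin_le_diam:
  assumes "even n" "1 \<le> t"
  shows "vmin \<le> diam t"
proof -
  have "vmin \<le> med (\<lambda>i. hi i t) - med (\<lambda>i. lo i t)"
    by (rule even_median_spread[OF assms(1) two_le_n queried_less[OF assms(2)]])
      (simp_all add: lo_le_hi lo_hi_gap[OF assms(2)] lo_queried[OF assms(2)] hi_queried[OF assms(2)])
  then show ?thesis
    using median_spread_le_diam[of t] by linarith
qed

definition "unqueried t = {i. i < n \<and> i \<noteq> \<sigma> t}"
definition "right_set t = {i. i < n \<and> i \<noteq> \<sigma> t \<and> queried_pos t - vmin / 2 \<le> lo i t}"
definition "left_set t = {i. i < n \<and> i \<noteq> \<sigma> t \<and> hi i t \<le> queried_pos t + vmin / 2}"

lemma finite_unqueried: "finite (unqueried t)"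
  by (simp add: unqueried_def)

lemma odd_split:
  assumes "odd n" "1 \<le> t" "diam t < vmin / 2"
  shows "right_set t \<union> left_set t = unqueried t" and "right_set t \<inter> left_set t = {}"
    and "card (right_set t) = card (left_set t)"
proof -
  have spread: "med (\<lambda>i. hi i t) - med (\<lambda>i. lo i t) < vmin / 2"
    using median_spread_le_diam[of t] assms(3) by linarith
  have "vmin / 2 < vmin"
    using vmin_pos by simp
  note split = odd_median_split[OF assms(1) queried_less[OF assms(2)] lo_le_hi[of _ t]
      lo_hi_gap[OF assms(2)] lo_queried[OF assms(2)] hi_queried[OF assms(2)] spread this]
  show "right_set t \<union> left_set t = unqueried t"
    unfolding right_set_def left_set_def unqueried_def using split(1) by simp
  show "right_set t \<inter> left_set t = {}"
    unfolding right_set_def left_set_def using split(2) by simp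
  show "card (right_set t) = card (left_set t)"
    unfolding right_set_def left_set_def using split(3) by simp
qed

definition "clearance t i = (if i \<in> right_set t then lo i t - queried_pos t else queried_pos t - hi i t)"
definition "potential t = (\<Sum>i\<in>unqueried t. clearance t i)"

lemma clearance_ge:
  assumes "odd n" "1 \<le> t" "diam t < vmin / 2" "i \<in> unqueried t"
  shows "- (vmin / 2) \<le> clearance t i"
proof -
  have "i \<in> right_set t \<or> i \<in> left_set t"
    using odd_split(1)[OF assms(1-3)] assms(4) by blast
  then show ?thesis
    by (auto simp: clearance_def right_set_def left_set_def)
qed

lemma potential_ge:
  assumes "odd n" "1 \<le> t" "diam t < vmin / 2"
  shows "- (real n * (vmin / 2)) \<le> potential t"
proof -
  have "- (real n * (vmin / 2)) \<le> - (real (card (unqueried t)) * (vmin / 2))"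
    using card_mono[of "{..<n}" "unqueried t"] vmin_pos by (auto simp: unqueried_def)
  also have "\<dots> = (\<Sum>i\<in>unqueried t. - (vmin / 2))"
    by simp
  also have "\<dots> \<le> potential t"
    unfolding potential_def by (intro sum_mono clearance_ge[OF assms])
  finally show ?thesis .
qed

lemma clearance_Suc_le:
  assumes "odd n" "1 \<le> t" "diam t < vmin / 2" "i \<in> unqueried (Suc t)"
  shows "clearance (Suc t) i \<le> (if i \<in> unqueried t then clearance t i else 0)
     + (if i \<in> right_set (Suc t) then -1 else 1) * (queried_pos (Suc t) - queried_pos t) - v i"
proof -
  have i: "i < n" "\<sigma> (Suc t) \<noteq> i"
    using assms(4) by (auto simp: unqueried_def)
  show ?thesis
  proof (cases "i = \<sigma> t")
    case True
    then show ?thesis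
      using lo_Suc[OF i(2)] hi_Suc[OF i(2)] lo_queried[OF assms(2)] hi_queried[OF assms(2)]
      by (auto simp: clearance_def unqueried_def)
  next
    case False
    then have unq: "i \<in> unqueried t"
      using i(1) by (simp add: unqueried_def)
    then have "i \<in> right_set t \<or> i \<in> left_set t"
      using odd_split(1)[OF assms(1-3)] by blast
    then show ?thesis
      using unq lo_hi_gap[OF assms(2) i(1) False] lo_Suc[OF i(2)] hi_Suc[OF i(2)] vmin_pos
      by (auto simp: clearance_def right_set_def left_set_def)
  qed
qed

lemma sign_sum_eq_zero:
  assumes "odd n" "1 \<le> t" "diam t < vmin / 2"
  shows "(\<Sum>i\<in>unqueried t. if i \<in> right_set t then -1 else 1 :: real) = 0"
proof -
  let ?s = "\<lambda>i. if i \<in> right_set t then -1 else 1 :: real"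
  have fin: "finite (right_set t)" "finite (left_set t)"
    by (simp_all add: right_set_def left_set_def)
  have "(\<Sum>i\<in>unqueried t. ?s i) = (\<Sum>i\<in>right_set t. ?s i) + (\<Sum>i\<in>left_set t. ?s i)"
    using sum.union_disjoint[OF fin odd_split(2)[OF assms], of ?s] odd_split(1)[OF assms] by simp
  also have "(\<Sum>i\<in>right_set t. ?s i) = - real (card (right_set t))"
    by simp
  also have "(\<Sum>i\<in>left_set t. ?s i) = (\<Sum>i\<in>left_set t. 1)"
    using odd_split(2)[OF assms] by (intro sum.cong) auto
  finally show ?thesis
    using odd_split(3)[OF assms] by simp
qed

lemma carried_clearance_le:
  assumes "odd n" "1 \<le> t" "diam t < vmin / 2"
  shows "(\<Sum>i\<in>unqueried (Suc t). if i \<in> unqueried t then clearance t i else 0) \<le> potential t + vmin / 2"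
proof (cases "\<sigma> (Suc t) = \<sigma> t")
  case True
  then show ?thesis
    using vmin_pos by (simp add: potential_def unqueried_def)
next
  case False
  then have j: "\<sigma> (Suc t) \<in> unqueried t"
    using queried_less[of "Suc t"] by (simp add: unqueried_def)
  have "(\<Sum>i\<in>unqueried (Suc t). if i \<in> unqueried t then clearance t i else 0)
      = (\<Sum>i\<in>unqueried t - {\<sigma> (Suc t)}. clearance t i)"
    by (subst sum.inter_restrict[OF finite_unqueried, symmetric])
      (auto intro!: sum.cong simp: unqueried_def)
  also have "\<dots> = potential t - clearance t (\<sigma> (Suc t))"
    unfolding potential_def using j by (simp add: sum_diff1 finite_unqueried)
  finally show ?thesis
    using clearance_ge[OF assms j] by linarith
qed

lemma vmin_le_sum_speeds: "vmin \<le> (\<Sum>i\<in>unqueried t. v i)"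
proof -
  define j :: nat where "j = (if \<sigma> t = 0 then 1 else 0)"
  have j: "j \<in> unqueried t"
    using two_le_n by (simp add: unqueried_def j_def)
  have "vmin \<le> v j"
    using j vmin_le by (simp add: unqueried_def)
  also have "\<dots> \<le> (\<Sum>i\<in>unqueried t. v i)"
    using j speed_pos by (intro member_le_sum finite_unqueried) (auto simp: unqueried_def less_imp_le)
  finally show ?thesis .
qed

lemma potential_Suc_le:
  assumes "odd n" "1 \<le> t" "diam t < vmin / 2" "diam (Suc t) < vmin / 2"
  shows "potential (Suc t) \<le> potential t - vmin / 2"
proof -
  let ?U = "unqueried (Suc t)"
  let ?s = "\<lambda>i. if i \<in> right_set (Suc t) then -1 else 1 :: real"
  have "potential (Suc t)
      \<le> (\<Sum>i\<in>?U. (if i \<in> unqueried t then clearance t i else 0)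
                     + ?s i * (queried_pos (Suc t) - queried_pos t) - v i)"
    unfolding potential_def by (intro sum_mono clearance_Suc_le[OF assms(1-3)])
  also have "\<dots> = (\<Sum>i\<in>?U. if i \<in> unqueried t then clearance t i else 0)
      + (\<Sum>i\<in>?U. ?s i) * (queried_pos (Suc t) - queried_pos t) - (\<Sum>i\<in>?U. v i)"
    by (simp add: sum.distrib sum_subtractf sum_distrib_right)
  also have "(\<Sum>i\<in>?U. ?s i) = 0"
    using sign_sum_eq_zero[OF assms(1) _ assms(4)] by simp
  finally show ?thesis
    using carried_clearance_le[OF assms(1-3)] vmin_le_sum_speeds[of "Suc t"] by linarith
qed

lemma odd_diam_ge:
  assumes "odd n"
  shows "\<exists>t\<ge>1. vmin / 2 \<le> diam t"
proof (rule ccontr)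
  assume "\<not> ?thesis"
  then have small: "diam t < vmin / 2" if "1 \<le> t" for t
    using that not_le by blast
  have descent: "potential (Suc k) \<le> potential 1 - real k * (vmin / 2)" for k
  proof (induction k)
    case (Suc k)
    have "potential (Suc (Suc k)) \<le> potential (Suc k) - vmin / 2"
      using potential_Suc_le[OF assms _ small[of "Suc k"] small[of "Suc (Suc k)"]] by simp
    with Suc.IH show ?case
      by (simp only: of_nat_Suc distrib_right mult_1)
  qed simp
  obtain k :: nat where "(potential 1 + real n * (vmin / 2)) / (vmin / 2) < real k"
    using reals_Archimedean2 by blast
  then have "potential 1 - real k * (vmin / 2) < - (real n * (vmin / 2))"
    using vmin_pos by (simp add: divide_less_eq)
  then show False
    using descent[of k] potential_ge[OF assms _ small[of "Suc k"]] by simp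
qed

lemma vmin_half_le_measure: "ereal (vmin / 2) \<le> measure_strat n v p \<sigma>"
proof -
  obtain t where "1 \<le> t" "vmin / 2 \<le> diam t"
  proof (cases "even n")
    case True
    then show ?thesis
      using that[of 1] even_vmin_le_diam[of 1] vmin_pos by simp
  next
    case False
    then show ?thesis
      using that odd_diam_ge by blast
  qed
  then show ?thesis
    unfolding measure_strat_def diam_def by (intro SUP_upper2[of t]) auto
qed

end

lemma round_robin_measure_le:
  assumes "valid_instance n v p"
  shows "measure_strat n v p (round_robin n) \<le> ereal (2 * (real n * Max (v ` {..<n})))"
proof -
  have "valid_strategy n (round_robin n)"
    using assms by (simp add: valid_instance_def valid_strategy_def round_robin_def)
  then interpret query_run n v p "round_robin n"
    using assms by unfold_locales
  define b where "b = real n * Max (v ` {..<n})"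
  have vmax: "v i \<le> Max (v ` {..<n})" if "i < n" for i
    using that by (intro Max_ge) auto
  have "radius i t \<le> b" if "i < n" for t i
  proof -
    have "real t - real (last_query (round_robin n) i t) \<le> real n"
      using round_robin_last_query[OF that, of t] by linarith
    moreover have "0 \<le> real t - real (last_query (round_robin n) i t)"
      using last_query_le[of "round_robin n" i t] by simp
    ultimately show ?thesis
      unfolding radius_def b_def using vmax[OF that] speed_pos[OF that]
      by (metis mult.commute mult_mono less_imp_le order_trans)
  qed
  moreover have "0 \<le> b"
    using valid_instance_speed_bounds[OF assms] by (simp add: b_def)
  ultimately have "diam t \<le> 2 * b" for t
    by (rule diam_le)
  then show ?thesis
    unfolding measure_strat_def b_def diam_def by (intro SUP_least) simp
qed

lemma OPT_ge_half_min_speed: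
  assumes "valid_instance n v p"
  shows "ereal (Min (v ` {..<n}) / 2) \<le> OPT n v p"
  unfolding OPT_def
proof (rule INF_greatest)
  fix \<sigma> assume "\<sigma> \<in> {\<sigma>. valid_strategy n \<sigma>}"
  then interpret query_run n v p \<sigma>
    using assms by (intro query_run.intro) simp_all
  show "ereal (Min (v ` {..<n}) / 2) \<le> measure_strat n v p \<sigma>"
    using vmin_half_le_measure by (simp add: vmin_def)
qed

theorem proposition5:
  shows "\<exists>C::real. \<forall>n v p. valid_instance n v p \<longrightarrow>
    measure_strat n v p (round_robin n) \<le>
      ereal (C * (Max (v ` {..<n}) * real n / Min (v ` {..<n}))) * OPT n v p"
proof (intro exI allI impI)
  fix n v p
  assume inst: "valid_instance n v p"
  define vM vm where "vM = Max (v ` {..<n})" and "vm = Min (v ` {..<n})"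
  have "vm > 0" "vm \<le> vM"
    using valid_instance_speed_bounds[OF inst] by (simp_all add: vM_def vm_def)
  have "measure_strat n v p (round_robin n) \<le> ereal (2 * (real n * vM))"
    using round_robin_measure_le[OF inst] by (simp add: vM_def)
  also have "\<dots> = ereal (4 * (vM * real n / vm)) * ereal (vm / 2)"
    using \<open>vm > 0\<close> by simp
  also have "\<dots> \<le> ereal (4 * (vM * real n / vm)) * OPT n v p"
    using OPT_ge_half_min_speed[OF inst] \<open>vm > 0\<close> \<open>vm \<le> vM\<close>
    by (intro ereal_mult_left_mono) (simp_all add: vm_def)
  finally show "measure_strat n v p (round_robin n) \<le>
      ereal (4 * (Max (v ` {..<n}) * real n / Min (v ` {..<n}))) * OPT n v p"
    by (simp add: vM_def vm_def)
qed

end
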